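(* Let $p\ge 7$ be a prime. Then $$\sum_{k=1}^{p-1}\frac{H_k}{k^2}\equiv \sum_{k=1}^{p-1}\frac{H_k^2}{k}\equiv -\frac{3}{p^2}\sum_{k=1}^{p-1}\frac{1}{k}\equiv \frac{3}{2p}\sum_{k=1}^{p-1}\frac{1}{k^2}\pmod{p^2}.$$
   Context: For positive integers $n,m$, $H_{n,m}=\sum_{k=1}^n 1/k^m$ and $H_n=H_{n,1}=\sum_{k=1}^n 1/k$; also $H_0=H_{0,m}=0$. Congruences modulo a prime power $p^e$ are taken in the ring of rational numbers whose denominators are not divisible by $p$: for such rationals $a,b$, $a\equiv b\pmod{p^e}$ means $a-b=p^e c$ with $c$ a rational whose denominator is not divisible by $p$. (The expressions $-\frac{3}{p^2}H_{p-1}$ and $\frac{3}{2p}H_{p-1,2}$ are $p$-integral for $p\ge 7$, since $p^2\mid H_{p-1}$ and $p\mid H_{p-1,2}$.) *)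

theory Defs
  imports Complex_Main "HOL-Computational_Algebra.Primes"
begin

definition harm :: "nat \<Rightarrow> nat \<Rightarrow> rat" where
  "harm n m = (\<Sum>k=1..n. 1 / (of_nat k) ^ m)"

definition p_integral :: "nat \<Rightarrow> rat \<Rightarrow> bool" where
  "p_integral p c \<longleftrightarrow> \<not> (int p dvd snd (quotient_of c))"

definition rat_cong :: "rat \<Rightarrow> rat \<Rightarrow> nat \<Rightarrow> nat \<Rightarrow> bool" where
  "rat_cong a b p e \<longleftrightarrow> (\<exists>c. a - b = (of_nat p) ^ e * c \<and> p_integral p c)"

end

theory Submission
  imports Defs "HOL-Number_Theory.Number_Theory"
begin

(* We work in the ring Z_(p) of p-integral rationals and write  p_dvd e x  for
   "p^e divides x in Z_(p)"; the congruences of the theorem are p_dvd 2 of differences.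
   1. Classical facts on H_{p-1,m}: power sums of 1..p-1 vanish mod p, so
      H_{p-1,m} = 0 mod p for 1 <= m <= p-2; pairing k with p-k gives
      H_{p-1,3} = 0 mod p^2 and H_{p-1} = -(p/2) H_{p-1,2} mod p^4.
   2. Exact identities for sums of harmonic numbers (by induction on n); in
      particular  3 S2 - 3 S1 + H_{p-1,3} = H_{p-1}^3, which gives S1 = S2 mod p^2.
   3. The binomial transform  T f n = sum_i (-1)^i C(n,i+1) f(i+1), which maps
      1/k to H_n and H_k/k^2 to sum H_m,2/m.  Since (-1)^k C(p-1,k) = prod_{j<=k}(1-p/j)
      = 1 - p H_k + p^2 e_2(k) mod p^3, the values of T at n = p-1 yield
      p S1 = (3/2) H_{p-1,2} mod p^3.
   The theorem then follows by chaining these congruences. *)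

section \<open>The ring of p-integral rationals\<close>

locale prime_modulus =
  fixes p :: nat
  assumes prime_p: "prime p"
begin

text \<open>A concrete description of p-integrality, convenient for closure properties.\<close>
definition p_int :: "rat \<Rightarrow> bool" where
  "p_int x \<longleftrightarrow> (\<exists>a b. b \<noteq> 0 \<and> \<not> int p dvd b \<and> x = of_int a / of_int b)"

lemma p_integral_iff: "p_integral p x \<longleftrightarrow> p_int x"
proof
  assume h: "p_integral p x"
  obtain a b where q: "quotient_of x = (a,b)" by (cases "quotient_of x")
  have "b > 0" using quotient_of_denom_pos[OF q] .
  moreover have "x = of_int a / of_int b" using quotient_of_div[OF q] .
  moreover have "\<not> int p dvd b" using h q unfolding p_integral_def by simp
  ultimately show "p_int x" unfolding p_int_def by (intro exI[of _ a] exI[of _ b]) auto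
next
  assume "p_int x"
  then obtain a b where ab: "b \<noteq> 0" "\<not> int p dvd b" "x = of_int a / of_int b"
    unfolding p_int_def by blast
  obtain a' b' where q: "quotient_of x = (a',b')" by (cases "quotient_of x")
  have b'_pos: "b' > 0" using quotient_of_denom_pos[OF q] .
  have "of_int a' / of_int b' = (of_int a / of_int b :: rat)" using quotient_of_div[OF q] ab by simp
  hence "of_int (a' * b) = (of_int (a * b') :: rat)" using ab(1) b'_pos by (simp add: field_simps)
  hence "a' * b = a * b'" by (simp only: of_int_eq_iff)
  hence "b' dvd a' * b" by simp
  hence "b' dvd b" using quotient_of_coprime[OF q] by (simp add: coprime_commute coprime_dvd_mult_right_iff)
  hence "\<not> int p dvd b'" using ab(2) dvd_trans by blast
  thus "p_integral p x" unfolding p_integral_def q by simp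
qed

lemma p_gt_1: "p > 1" using prime_p prime_gt_1_nat by blast

lemma p_nonzero: "(of_nat p :: rat) \<noteq> 0" using p_gt_1 by simp

lemma p_int_of_int [simp]: "p_int (of_int z)"
  unfolding p_int_def using p_gt_1 by (intro exI[of _ z] exI[of _ 1]) auto

lemma p_int_of_nat [simp]: "p_int (of_nat n)"
  using p_int_of_int[of "int n"] by simp

lemma p_int_numeral [simp]: "p_int (numeral n)"
  using p_int_of_nat[of "numeral n"] by simp

lemma p_int_0 [simp]: "p_int 0" and p_int_1 [simp]: "p_int 1"
  using p_int_of_int[of 0] p_int_of_int[of 1] by simp_all

text \<open>Closure under ring operations: denominators prime to p are multiplicative.\<close>
lemma p_int_add [intro]: "p_int x \<Longrightarrow> p_int y \<Longrightarrow> p_int (x + y)"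
  and p_int_mult [intro]: "p_int x \<Longrightarrow> p_int y \<Longrightarrow> p_int (x * y)"
proof -
  assume "p_int x" "p_int y"
  then obtain a b c d where h: "b \<noteq> 0" "\<not> int p dvd b" "x = of_int a / of_int b"
     "d \<noteq> 0" "\<not> int p dvd d" "y = of_int c / of_int d" unfolding p_int_def by blast
  have bd: "\<not> int p dvd b * d" using h prime_p by (simp add: prime_dvd_mult_iff)
  have "b * d \<noteq> 0" using h by simp
  moreover have "x + y = of_int (a*d + c*b) / of_int (b*d)" "x * y = of_int (a*c) / of_int (b*d)"
    using h by (simp_all add: field_simps)
  ultimately show "p_int (x + y)" "p_int (x * y)" unfolding p_int_def using bd by blast+
qed

lemma p_int_minus [intro]: "p_int x \<Longrightarrow> p_int (- x)"
  using p_int_mult[of "-1" x] p_int_of_int[of "-1"] by simp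

lemma p_int_diff [intro]: "p_int x \<Longrightarrow> p_int y \<Longrightarrow> p_int (x - y)"
  using p_int_add[of x "-y"] by auto

lemma p_int_power [intro]: "p_int x \<Longrightarrow> p_int (x ^ n)"
  by (induction n) auto

lemma p_int_sum [intro]: "(\<And>i. i \<in> A \<Longrightarrow> p_int (f i)) \<Longrightarrow> p_int (sum f A)"
  by (induction A rule: infinite_finite_induct) auto

lemma p_int_inverse_nat: "0 < k \<Longrightarrow> k < p \<Longrightarrow> p_int (1 / of_nat k)"
proof -
  assume "0 < k" "k < p"
  hence "\<not> int p dvd int k" by (auto dest: zdvd_imp_le)
  moreover have "1 / of_nat k = (of_int 1 / of_int (int k) :: rat)" by simp
  ultimately show ?thesis unfolding p_int_def using \<open>0 < k\<close>
    by (intro exI[of _ 1] exI[of _ "int k"]) simp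
qed

lemma p_int_divide_nat_power [intro]:
  "p_int x \<Longrightarrow> 0 < k \<Longrightarrow> k < p \<Longrightarrow> p_int (x / of_nat k ^ m)"
  using p_int_mult[OF _ p_int_power[OF p_int_inverse_nat[of k]], of x m]
  by (simp add: power_one_over)

lemma p_int_harm: "n < p \<Longrightarrow> p_int (harm n m)"
  unfolding harm_def by (intro p_int_sum) (auto intro!: p_int_divide_nat_power)

definition p_dvd :: "nat \<Rightarrow> rat \<Rightarrow> bool" where
  "p_dvd e x \<longleftrightarrow> p_int (x / of_nat p ^ e)"

lemma rat_cong_iff: "rat_cong a b p e \<longleftrightarrow> p_dvd e (a - b)"
  unfolding rat_cong_def p_dvd_def p_integral_iff
proof
  assume "\<exists>c. a - b = of_nat p ^ e * c \<and> p_int c"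
  then obtain c where "a - b = of_nat p ^ e * c" "p_int c" by blast
  thus "p_int ((a - b) / of_nat p ^ e)" using p_nonzero by simp
next
  assume "p_int ((a - b) / of_nat p ^ e)"
  thus "\<exists>c. a - b = of_nat p ^ e * c \<and> p_int c" using p_nonzero
    by (intro exI[of _ "(a - b) / of_nat p ^ e"]) auto
qed

lemma p_dvd_zero [simp]: "p_dvd e 0" unfolding p_dvd_def by simp

lemma p_dvd_add [intro]: "p_dvd e x \<Longrightarrow> p_dvd e y \<Longrightarrow> p_dvd e (x + y)"
  unfolding p_dvd_def using p_int_add by (simp add: add_divide_distrib)

lemma p_dvd_minus [intro]: "p_dvd e x \<Longrightarrow> p_dvd e (- x)"
  unfolding p_dvd_def using p_int_minus by simp

lemma p_dvd_diff [intro]: "p_dvd e x \<Longrightarrow> p_dvd e y \<Longrightarrow> p_dvd e (x - y)"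
  using p_dvd_add[of e x "-y"] by auto

lemma p_dvd_sum [intro]: "(\<And>i. i \<in> A \<Longrightarrow> p_dvd e (f i)) \<Longrightarrow> p_dvd e (sum f A)"
  by (induction A rule: infinite_finite_induct) auto

lemma p_dvd_mult_left [intro]: "p_dvd e x \<Longrightarrow> p_int c \<Longrightarrow> p_dvd e (c * x)"
  unfolding p_dvd_def using p_int_mult[of c "x / of_nat p ^ e"] by simp

lemma p_dvd_mult_right [intro]: "p_dvd e x \<Longrightarrow> p_int c \<Longrightarrow> p_dvd e (x * c)"
  by (metis p_dvd_mult_left mult.commute)

lemma p_dvd_mult: "p_dvd e x \<Longrightarrow> p_dvd f y \<Longrightarrow> p_dvd (e + f) (x * y)"
  unfolding p_dvd_def using p_int_mult[of "x / of_nat p ^ e" "y / of_nat p ^ f"]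
  by (simp add: power_add)

lemma p_dvd_power_p [intro]: "p_dvd e (of_nat p ^ e)"
  unfolding p_dvd_def using p_nonzero by simp

lemma p_dvd_mult_power_p: "p_dvd e x \<Longrightarrow> p_dvd (f + e) (of_nat p ^ f * x)"
  using p_dvd_mult[OF p_dvd_power_p] .

lemma p_dvd_divide_nat_power [intro]:
  "p_dvd e x \<Longrightarrow> 0 < k \<Longrightarrow> k < p \<Longrightarrow> p_dvd e (x / of_nat k ^ m)"
  unfolding p_dvd_def using p_int_divide_nat_power[of "x / of_nat p ^ e" k m]
  by (simp add: mult.commute)

lemma p_dvd_mono: "e \<le> f \<Longrightarrow> p_dvd f x \<Longrightarrow> p_dvd e x"
proof -
  assume "e \<le> f" "p_dvd f x"
  then obtain d where "f = e + d" by (metis le_add_diff_inverse)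
  hence "x / of_nat p ^ e = (x / of_nat p ^ f) * of_nat (p ^ d)" using p_nonzero
    by (simp add: power_add field_simps)
  thus "p_dvd e x" using \<open>p_dvd f x\<close> unfolding p_dvd_def by (metis p_int_mult p_int_of_nat)
qed

lemma p_dvd_divide_power_p: "p_dvd (e + f) x \<Longrightarrow> p_dvd e (x / of_nat p ^ f)"
  unfolding p_dvd_def by (simp add: power_add divide_divide_eq_left mult.commute)

lemma p_dvd_of_int: "int p dvd z \<Longrightarrow> p_dvd 1 (of_int z)"
  unfolding p_dvd_def using p_nonzero by (auto elim!: dvdE)

lemma rat_cong_sym: "rat_cong a b p e \<Longrightarrow> rat_cong b a p e"
  unfolding rat_cong_iff using p_dvd_minus[of e "a - b"] by simp

lemma rat_cong_trans: "rat_cong a b p e \<Longrightarrow> rat_cong b c p e \<Longrightarrow> rat_cong a c p e"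
  unfolding rat_cong_iff using p_dvd_add[of e "a - b" "b - c"] by simp

end

text \<open>Most of the development needs 2 and 3 to be invertible and p - 1 not to divide 4.\<close>
locale prime_ge_7 = prime_modulus +
  assumes p_ge_7: "p \<ge> 7"
begin

lemma p_int_half: "p_int (1/2)"
  using p_int_inverse_nat[of 2] p_ge_7 by simp

lemma p_int_third: "p_int (1/3)"
  using p_int_inverse_nat[of 3] p_ge_7 by simp

end

section \<open>Generalized harmonic numbers H_{p-1,m} modulo powers of p\<close>

context prime_modulus
begin

text \<open>Power sums: p divides the sum of k^j over k < p whenever j < p - 1.
  Induction on j via telescoping of (k+1)^(j+1) - k^(j+1).\<close>
lemma power_sum_dvd: "j < p - 1 \<Longrightarrow> int p dvd (\<Sum>k<p. int k ^ j)"
proof (induction j rule: less_induct)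
  case (less j)
  define S where "S i = (\<Sum>k<p. int k ^ i)" for i
  have binomial_step: "int (Suc k) ^ Suc j - int k ^ Suc j
      = (\<Sum>i\<le>j. of_nat (Suc j choose i) * int k ^ i)" for k
  proof -
    have "int (Suc k) ^ Suc j = (int k + 1) ^ Suc j" by (simp add: add.commute)
    also have "\<dots> = (\<Sum>i\<le>Suc j. of_nat (Suc j choose i) * int k ^ i)"
      by (subst binomial_ring) simp
    finally show ?thesis by simp
  qed
  have "int p ^ Suc j = (\<Sum>k<p. int (Suc k) ^ Suc j - int k ^ Suc j)"
    by (subst sum_lessThan_telescope) simp
  also have "\<dots> = (\<Sum>i\<le>j. of_nat (Suc j choose i) * S i)"
    unfolding binomial_step S_def by (subst sum.swap) (simp add: sum_distrib_left)
  also have "\<dots> = (\<Sum>i<j. of_nat (Suc j choose i) * S i) + of_nat (Suc j) * S j"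
    by (simp add: lessThan_Suc_atMost[symmetric])
  finally have eq: "of_nat (Suc j) * S j = int p ^ Suc j - (\<Sum>i<j. of_nat (Suc j choose i) * S i)"
    by simp
  have "int p dvd (\<Sum>i<j. of_nat (Suc j choose i) * S i)"
    using less unfolding S_def by (intro dvd_sum) simp
  hence "int p dvd of_nat (Suc j) * S j" using eq by simp
  moreover have "\<not> int p dvd int (Suc j)" using less by (auto dest: zdvd_imp_le)
  ultimately show ?case using prime_p unfolding S_def by (simp add: prime_dvd_mult_iff)
qed

text \<open>H_{p-1,m} = 0 mod p for 1 <= m <= p-2: by Fermat, 1/k^m = k^(p-1-m) mod p.\<close>
lemma harm_p_dvd: assumes "1 \<le> m" "m \<le> p - 2" shows "p_dvd 1 (harm (p-1) m)"
proof -
  define j where "j = p - 1 - m"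
  have j: "1 \<le> j" "j < p - 1" "j + m = p - 1" using assms p_gt_1 unfolding j_def by auto
  have fermat_term: "p_dvd 1 (1 / of_nat k ^ m - of_nat (k ^ j))" if k: "k \<in> {1..p-1}" for k
  proof -
    have "\<not> p dvd k" using k by (auto dest: dvd_imp_le)
    hence "[k ^ (p-1) = 1] (mod p)" using fermat_theorem prime_p by blast
    hence "int p dvd (1 - int k ^ (p-1))"
      by (metis cong_iff_dvd_diff cong_int_iff cong_sym of_nat_1 of_nat_power)
    hence "p_dvd 1 (of_int (1 - int k ^ (p-1)) / of_nat k ^ m)"
      using k by (intro p_dvd_divide_nat_power p_dvd_of_int) auto
    moreover have "1 / of_nat k ^ m - of_nat (k ^ j) = (of_int (1 - int k ^ (p-1)) / of_nat k ^ m :: rat)"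
      using k j(3)[symmetric] by (simp add: field_simps power_add)
    ultimately show ?thesis by simp
  qed
  have "{..<p} = insert 0 {1..p-1}" using p_gt_1 by auto
  hence "(of_int (\<Sum>k<p. int k ^ j) :: rat) = (\<Sum>k=1..p-1. of_nat (k ^ j))"
    using j by simp
  hence "p_dvd 1 (\<Sum>k=1..p-1. of_nat (k ^ j) :: rat)"
    using p_dvd_of_int[OF power_sum_dvd[OF j(2)]] by simp
  moreover have "p_dvd 1 (\<Sum>k=1..p-1. 1 / of_nat k ^ m - of_nat (k ^ j))"
    using fermat_term by blast
  ultimately have "p_dvd 1 ((\<Sum>k=1..p-1. 1 / of_nat k ^ m - of_nat (k ^ j)) + (\<Sum>k=1..p-1. of_nat (k ^ j)))"
    by blast
  thus ?thesis unfolding harm_def by (simp add: sum_subtractf)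
qed

lemma harm_reflect: "2 * harm (p-1) m = (\<Sum>k=1..p-1. 1/of_nat k^m + 1/of_nat (p-k)^m)"
proof -
  have "(\<Sum>k=1..p-1. 1/(of_nat k::rat)^m) = (\<Sum>k=1..p-1. 1/of_nat (p - 1 + 1 - k)^m)"
    by (rule sum.atLeastAtMost_rev)
  also have "\<dots> = (\<Sum>k=1..p-1. 1/of_nat (p-k)^m)" using p_gt_1 by simp
  finally show ?thesis unfolding harm_def sum.distrib by simp
qed

end

lemma reflection_identity_1:
  "(x::'a::field) \<noteq> 0 \<Longrightarrow> P - x \<noteq> 0 \<Longrightarrow>
   1/x + 1/(P-x) + P/x^2 + P^2/x^3 + P^3/x^4 = P^4 * ((1/x^4)/(P-x))"
  by (simp add: field_simps power_eq_if)

lemma reflection_identity_3: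
  "(x::'a::field) \<noteq> 0 \<Longrightarrow> P - x \<noteq> 0 \<Longrightarrow>
   1/x^3 + 1/(P-x)^3 + 3*P/x^4 = P^2 * ((3*P^2 - 8*P*x + 6*x^2) * ((1/x^4)/(P-x)^3))"
  by (simp add: divide_simps) (simp add: power_eq_if algebra_simps)

context prime_ge_7
begin

lemma harm2_p_dvd: "p_dvd 1 (harm (p-1) 2)"
  by (rule harm_p_dvd) (use p_ge_7 in auto)

lemma harm4_p_dvd: "p_dvd 1 (harm (p-1) 4)"
  by (rule harm_p_dvd) (use p_ge_7 in auto)

lemma harm3_p_dvd: "p_dvd 2 (harm (p-1) 3)"
proof -
  have pair: "p_dvd 2 (1/of_nat k^3 + 1/of_nat (p-k)^3 + 3 * of_nat p/of_nat k^4)"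
    if k: "k \<in> {1..p-1}" for k
  proof -
    have kp: "0 < k" "k < p" "0 < p - k" "p - k < p" using k p_gt_1 by auto
    define X where "X = (3*of_nat p^2 - 8*of_nat p*of_nat k + 6*of_nat k^2)
                        * ((1 / of_nat k ^ 4) / (of_nat (p - k)::rat) ^ 3)"
    have "(1/of_nat k^3 + 1/of_nat (p-k)^3 + 3 * of_nat p/of_nat k^4 :: rat) = of_nat p^2 * X"
      unfolding X_def using kp by (simp add: reflection_identity_3)
    moreover have "p_dvd 2 (of_nat p^2 * X)" unfolding X_def using kp
      by (intro p_dvd_mult_right p_dvd_power_p p_int_mult p_int_divide_nat_power p_int_diff p_int_add) auto
    ultimately show ?thesis by simp
  qed
  have "p_dvd 2 (\<Sum>k=1..p-1. 1/of_nat k^3 + 1/of_nat (p-k)^3 + 3 * of_nat p/of_nat k^4)"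
    using pair by blast
  also have "(\<Sum>k=1..p-1. 1/of_nat k^3 + 1/of_nat (p-k)^3 + 3 * of_nat p/of_nat k^4)
     = 2 * harm (p-1) 3 + 3 * (of_nat p ^ 1 * harm (p-1) 4)"
    unfolding harm_reflect sum.distrib by (simp add: harm_def sum_distrib_left)
  finally have "p_dvd 2 (2 * harm (p-1) 3 + 3 * (of_nat p ^ 1 * harm (p-1) 4))" .
  moreover have "p_dvd 2 (3 * (of_nat p ^ 1 * harm (p-1) 4))"
    using p_dvd_mult_power_p[OF harm4_p_dvd, of 1] by (auto simp: numeral_2_eq_2)
  ultimately have "p_dvd 2 ((1/2) * ((2 * harm (p-1) 3 + 3 * (of_nat p ^ 1 * harm (p-1) 4))
                                      - 3 * (of_nat p ^ 1 * harm (p-1) 4)))"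
    using p_int_half by blast
  thus ?thesis by simp
qed

lemma harm1_reflection: "p_dvd 4 (harm (p-1) 1 + of_nat p / 2 * harm (p-1) 2)"
proof -
  have pair: "p_dvd 4 (1/of_nat k + 1/of_nat (p-k) + of_nat p/of_nat k^2
                        + of_nat p^2/of_nat k^3 + of_nat p^3/of_nat k^4)"
    if k: "k \<in> {1..p-1}" for k
  proof -
    have kp: "0 < k" "k < p" "0 < p - k" "p - k < p" using k p_gt_1 by auto
    define Y where "Y = (1 / of_nat k ^ 4) / (of_nat (p - k) :: rat) ^ 1"
    have "(1/of_nat k + 1/of_nat (p-k) + of_nat p/of_nat k^2 + of_nat p^2/of_nat k^3
           + of_nat p^3/of_nat k^4 :: rat) = of_nat p^4 * Y"
      unfolding Y_def using kp by (simp add: reflection_identity_1)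
    moreover have "p_dvd 4 (of_nat p^4 * Y)"
      unfolding Y_def using kp by (intro p_dvd_mult_right p_dvd_power_p p_int_divide_nat_power) auto
    ultimately show ?thesis by simp
  qed
  define R where "R = of_nat p^2 * harm (p-1) 3 + of_nat p^3 * harm (p-1) 4"
  have "p_dvd 4 (\<Sum>k=1..p-1. 1/of_nat k + 1/of_nat (p-k) + of_nat p/of_nat k^2
                              + of_nat p^2/of_nat k^3 + of_nat p^3/of_nat k^4)"
    using pair by blast
  also have "(\<Sum>k=1..p-1. 1/of_nat k + 1/of_nat (p-k) + of_nat p/of_nat k^2
                     + of_nat p^2/of_nat k^3 + of_nat p^3/of_nat k^4)
     = 2 * harm (p-1) 1 + of_nat p * harm (p-1) 2 + R"
    using harm_reflect[of 1] unfolding R_def by (simp add: sum.distrib harm_def sum_distrib_left)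
  finally have "p_dvd 4 (2 * harm (p-1) 1 + of_nat p * harm (p-1) 2 + R)" .
  moreover have "p_dvd 4 R"
    using p_dvd_mult_power_p[OF harm3_p_dvd, of 2] p_dvd_mult_power_p[OF harm4_p_dvd, of 3]
    unfolding R_def by auto
  ultimately have "p_dvd 4 ((1/2) * ((2 * harm (p-1) 1 + of_nat p * harm (p-1) 2 + R) - R))"
    using p_int_half by blast
  thus ?thesis by (simp add: field_simps)
qed

lemma harm1_p_dvd: "p_dvd 2 (harm (p-1) 1)"
proof -
  have "p_dvd 2 (harm (p-1) 1 + of_nat p / 2 * harm (p-1) 2)"
    using p_dvd_mono[OF _ harm1_reflection] by simp
  moreover have "p_dvd 2 ((1/2) * (of_nat p ^ 1 * harm (p-1) 2))"
    using p_dvd_mult_left[OF p_dvd_mult_power_p[OF harm2_p_dvd, of 1] p_int_half]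
    by (simp add: numeral_2_eq_2)
  ultimately have "p_dvd 2 ((harm (p-1) 1 + of_nat p / 2 * harm (p-1) 2)
                            - (1/2) * (of_nat p ^ 1 * harm (p-1) 2))"
    by blast
  thus ?thesis by simp
qed

end

section \<open>Exact identities for sums of harmonic numbers\<close>

lemma sum_upto_Suc: "(\<Sum>k=1..Suc n. f k) = (\<Sum>k=1..n. f k) + (f (Suc n) :: rat)"
  by simp

lemma harm_Suc: "x = 1 / of_nat (Suc n) \<Longrightarrow> harm (Suc n) m = harm n m + x ^ m"
  unfolding harm_def by (simp add: power_one_over)

lemma sum_harm_over_k: "(\<Sum>k=1..n. harm k 1 / of_nat k) = (harm n 1 ^ 2 + harm n 2) / 2"
proof (induction n)
  case (Suc n)
  define x where "x = 1 / (of_nat (Suc n) :: rat)"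
  have "harm (Suc n) 1 / of_nat (Suc n) = (harm n 1 + x) * x"
    unfolding harm_Suc[OF x_def] x_def by (simp add: divide_simps)
  hence "(\<Sum>k=1..Suc n. harm k 1 / of_nat k) = (harm n 1 ^ 2 + harm n 2) / 2 + (harm n 1 + x) * x"
    unfolding sum_upto_Suc Suc by simp
  also have "\<dots> = (harm (Suc n) 1 ^ 2 + harm (Suc n) 2) / 2"
    unfolding harm_Suc[OF x_def] by (simp add: field_simps power2_eq_square)
  finally show ?case .
qed (simp add: harm_def)

lemma sum_harm2_over_k_plus_sum_harm_over_k2:
  "(\<Sum>k=1..n. harm k 2 / of_nat k) + (\<Sum>k=1..n. harm k 1 / of_nat k ^ 2)
     = harm n 1 * harm n 2 + harm n 3"
proof (induction n)
  case (Suc n)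
  define x where "x = 1 / (of_nat (Suc n) :: rat)"
  have "harm (Suc n) 2 / of_nat (Suc n) = (harm n 2 + x^2) * x"
    "harm (Suc n) 1 / of_nat (Suc n) ^ 2 = (harm n 1 + x) * x^2"
    unfolding harm_Suc[OF x_def] x_def by (simp_all add: divide_simps)
  hence "(\<Sum>k=1..Suc n. harm k 2 / of_nat k) + (\<Sum>k=1..Suc n. harm k 1 / of_nat k ^ 2)
      = harm n 1 * harm n 2 + harm n 3 + (harm n 2 + x^2) * x + (harm n 1 + x) * x^2"
    unfolding sum_upto_Suc Suc[symmetric] by simp
  thus ?case unfolding harm_Suc[OF x_def] by (simp add: algebra_simps power_eq_if)
qed (simp add: harm_def)

lemma harm_cube_identity:
  "3 * (\<Sum>k=1..n. harm k 1 ^ 2 / of_nat k) - 3 * (\<Sum>k=1..n. harm k 1 / of_nat k ^ 2)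
     + harm n 3 = harm n 1 ^ 3"
proof (induction n)
  case (Suc n)
  define x where "x = 1 / (of_nat (Suc n) :: rat)"
  have "harm (Suc n) 1 ^ 2 / of_nat (Suc n) = (harm n 1 + x)^2 * x"
    "harm (Suc n) 1 / of_nat (Suc n) ^ 2 = (harm n 1 + x) * x^2"
    unfolding harm_Suc[OF x_def] x_def by (simp_all add: divide_simps)
  hence "3 * (\<Sum>k=1..Suc n. harm k 1 ^ 2 / of_nat k) - 3 * (\<Sum>k=1..Suc n. harm k 1 / of_nat k ^ 2)
       + harm (Suc n) 3
     = harm n 1 ^ 3 + 3 * ((harm n 1 + x)^2 * x) - 3 * ((harm n 1 + x) * x^2) + x^3"
    unfolding sum_upto_Suc harm_Suc[OF x_def, of 3] Suc[symmetric] by (simp add: algebra_simps)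
  thus ?case unfolding harm_Suc[OF x_def] by (simp add: algebra_simps power_eq_if)
qed (simp add: harm_def)

lemma sum_harm2_over_k2: "(\<Sum>k=1..n. harm k 2 / of_nat k ^ 2) = (harm n 2 ^ 2 + harm n 4) / 2"
proof (induction n)
  case (Suc n)
  define x where "x = 1 / (of_nat (Suc n) :: rat)"
  have "harm (Suc n) 2 / of_nat (Suc n) ^ 2 = (harm n 2 + x^2) * x^2"
    unfolding harm_Suc[OF x_def] x_def by (simp add: divide_simps)
  hence "(\<Sum>k=1..Suc n. harm k 2 / of_nat k ^ 2) = (harm n 2 ^ 2 + harm n 4) / 2 + (harm n 2 + x^2) * x^2"
    unfolding sum_upto_Suc Suc by simp
  also have "\<dots> = (harm (Suc n) 2 ^ 2 + harm (Suc n) 4) / 2"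
    unfolding harm_Suc[OF x_def] by (simp add: field_simps power_eq_if)
  finally show ?case .
qed (simp add: harm_def)

text \<open>The second elementary symmetric function of 1, 1/2, ..., 1/n.\<close>
definition harm_e2 :: "nat \<Rightarrow> rat" where
  "harm_e2 n = (harm n 1 ^ 2 - harm n 2) / 2"

lemma harm_e2_Suc: "x = 1 / of_nat (Suc n) \<Longrightarrow> harm_e2 (Suc n) = harm_e2 n + harm n 1 * x"
  unfolding harm_e2_def using harm_Suc[of x n] by (simp add: field_simps power2_eq_square)

lemma sum_harm_e2_over_k2:
  "(\<Sum>k=1..n. harm_e2 k / of_nat k ^ 2)
     = ((\<Sum>k=1..n. harm k 1 ^ 2 / of_nat k ^ 2) - (harm n 2 ^ 2 + harm n 4) / 2) / 2"
proof -
  have "(\<Sum>k=1..n. harm_e2 k / of_nat k ^ 2)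
      = (\<Sum>k=1..n. harm k 1 ^ 2 / of_nat k ^ 2 - harm k 2 / of_nat k ^ 2) / 2"
    unfolding sum_divide_distrib by (rule sum.cong) (simp_all add: harm_e2_def diff_divide_distrib)
  thus ?thesis unfolding sum_subtractf sum_harm2_over_k2 .
qed

section \<open>The binomial transform\<close>

text \<open>T f n = sum_{i<n} (-1)^i C(n,i+1) f(i+1).  At n = p - 1 the coefficients
  (-1)^k C(p-1,k) are close to 1 modulo p, which turns exact evaluations of T into
  congruences.\<close>
definition binomial_transform :: "(nat \<Rightarrow> rat) \<Rightarrow> nat \<Rightarrow> rat" where
  "binomial_transform f n = (\<Sum>i<n. (-1)^i * of_nat (n choose Suc i) * f (Suc i))"

text \<open>Pascal's rule splits T f (n+1) into T f n plus an alternating sum of row n.\<close>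
lemma binomial_transform_Suc:
  "binomial_transform f (Suc n)
     = binomial_transform f n + (\<Sum>i\<le>n. (-1)^i * of_nat (n choose i) * f (Suc i))"
proof -
  have "binomial_transform f (Suc n) = (\<Sum>i<Suc n. (-1)^i * of_nat (n choose i) * f (Suc i))
      + (\<Sum>i<Suc n. (-1)^i * of_nat (n choose Suc i) * f (Suc i))"
    unfolding binomial_transform_def by (simp add: sum.distrib algebra_simps)
  also have "(\<Sum>i<Suc n. (-1)^i * of_nat (n choose Suc i) * f (Suc i)) = binomial_transform f n"
    unfolding binomial_transform_def by simp
  finally show ?thesis by (simp add: lessThan_Suc_atMost add.commute)
qed

lemma binomial_transform_const: "binomial_transform (\<lambda>_. 1) n = (if n = 0 then 0 else 1)"
proof (induction n)
  case (Suc n)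
  show ?case
  proof (cases "n = 0")
    case False
    hence "(\<Sum>i\<le>n. (-1)^i * of_nat (n choose i) * (1::rat)) = 0"
      using choose_alternating_sum[of n] by simp
    thus ?thesis using Suc False by (simp add: binomial_transform_Suc)
  qed (simp add: binomial_transform_def)
qed (simp add: binomial_transform_def)

text \<open>The row-n alternating sum of f(i+1)/(i+1) is T f (n+1)/(n+1), since
  C(n,i)/(i+1) = C(n+1,i+1)/(n+1).\<close>
lemma alternating_row_sum_divide:
  "(\<Sum>i\<le>n. (-1)^i * of_nat (n choose i) * (g (Suc i) / of_nat (Suc i)))
     = binomial_transform g (Suc n) / of_nat (Suc n)"
proof -
  have "(-1)^i * of_nat (n choose i) * (g (Suc i) / of_nat (Suc i)) =
        (-1)^i * of_nat (Suc n choose Suc i) * g (Suc i) / of_nat (Suc n)" for i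
  proof -
    have "of_nat (Suc n) * of_nat (n choose i) = (of_nat (Suc n choose Suc i) * of_nat (Suc i) :: rat)"
      using Suc_times_binomial_eq[of n i] by (metis of_nat_mult)
    hence "of_nat (n choose i) / of_nat (Suc i) = (of_nat (Suc n choose Suc i) / of_nat (Suc n) :: rat)"
      by (simp add: divide_simps del: binomial_Suc_Suc of_nat_Suc)
         (simp add: algebra_simps del: binomial_Suc_Suc of_nat_Suc)
    thus ?thesis by (metis (no_types, lifting) times_divide_eq_left times_divide_eq_right mult.commute)
  qed
  hence "(\<Sum>i\<le>n. (-1)^i * of_nat (n choose i) * (g (Suc i) / of_nat (Suc i))) =
     (\<Sum>i<Suc n. (-1)^i * of_nat (Suc n choose Suc i) * g (Suc i) / of_nat (Suc n))"
    by (simp add: lessThan_Suc_atMost)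
  also have "\<dots> = binomial_transform g (Suc n) / of_nat (Suc n)"
    by (simp only: binomial_transform_def sum_divide_distrib)
  finally show ?thesis .
qed

lemma binomial_transform_divide:
  "binomial_transform (\<lambda>k. f k / of_nat k) n = (\<Sum>m=1..n. binomial_transform f m / of_nat m)"
proof (induction n)
  case (Suc n)
  have "binomial_transform (\<lambda>k. f k / of_nat k) (Suc n)
      = binomial_transform (\<lambda>k. f k / of_nat k) n + binomial_transform f (Suc n) / of_nat (Suc n)"
    using binomial_transform_Suc[of "\<lambda>k. f k / of_nat k" n] alternating_row_sum_divide[of n f] by simp
  then show ?case using Suc by simp
qed (simp add: binomial_transform_def)

lemma binomial_transform_harm:
  "binomial_transform (\<lambda>k. harm k 1) n = (if n = 0 then 0 else 1 / of_nat n)"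
proof (cases n)
  case 0 then show ?thesis by (simp add: binomial_transform_def)
next
  case (Suc m)
  have row: "(\<Sum>i\<le>m. (-1)^i * of_nat (m choose i) * harm i 1) = - binomial_transform (\<lambda>k. harm k 1) m"
  proof (cases m)
    case 0 then show ?thesis by (simp add: binomial_transform_def harm_def)
  next
    case (Suc q)
    have "(\<Sum>i\<le>m. (-1)^i * of_nat (m choose i) * harm i 1)
        = (\<Sum>i\<le>q. (-1)^(Suc i) * of_nat (m choose Suc i) * harm (Suc i) 1)"
      unfolding Suc sum.atMost_Suc_shift by (simp add: harm_def)
    also have "\<dots> = - binomial_transform (\<lambda>k. harm k 1) m"
      unfolding binomial_transform_def Suc lessThan_Suc_atMost[symmetric]
      by (simp add: sum_negf[symmetric])
    finally show ?thesis .
  qed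
  have "binomial_transform (\<lambda>k. harm k 1) (Suc m) = binomial_transform (\<lambda>k. harm k 1) m
     + (\<Sum>i\<le>m. (-1)^i * of_nat (m choose i) * harm i 1)
     + (\<Sum>i\<le>m. (-1)^i * of_nat (m choose i) * ((\<lambda>_. 1) (Suc i) / of_nat (Suc i)))"
    unfolding binomial_transform_Suc harm_Suc[OF refl] by (simp add: algebra_simps sum.distrib)
  also have "\<dots> = 1 / of_nat (Suc m)"
    using alternating_row_sum_divide[of m "\<lambda>_. 1"] binomial_transform_const[of "Suc m"] row by simp
  finally show ?thesis using Suc by simp
qed

lemma binomial_transform_inverse_square:
  "binomial_transform (\<lambda>k. 1 / of_nat k ^ 2) n = (\<Sum>m=1..n. harm m 1 / of_nat m)"
proof -
  have inv: "binomial_transform (\<lambda>k. 1 / of_nat k) m = harm m 1" for m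
  proof -
    have "binomial_transform (\<lambda>k. 1 / of_nat k) m
        = (\<Sum>j=1..m. binomial_transform (\<lambda>_. 1) j / of_nat j)"
      using binomial_transform_divide[of "\<lambda>_. 1" m] by simp
    also have "\<dots> = (\<Sum>j=1..m. 1 / of_nat j ^ 1)"
      by (rule sum.cong) (auto simp: binomial_transform_const)
    finally show ?thesis unfolding harm_def .
  qed
  have "(\<lambda>k. 1 / (of_nat k::rat) ^ 2) = (\<lambda>k. (1 / of_nat k) / of_nat k)"
    by (simp add: power2_eq_square)
  hence "binomial_transform (\<lambda>k. 1 / of_nat k ^ 2) n
      = (\<Sum>m=1..n. binomial_transform (\<lambda>k. 1 / of_nat k) m / of_nat m)"
    using binomial_transform_divide[of "\<lambda>k. 1 / of_nat k" n] by simp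
  thus ?thesis unfolding inv .
qed

lemma binomial_transform_harm_over_square:
  "binomial_transform (\<lambda>k. harm k 1 / of_nat k ^ 2) n = (\<Sum>m=1..n. harm m 2 / of_nat m)"
proof -
  have div: "binomial_transform (\<lambda>k. harm k 1 / of_nat k) m = harm m 2" for m
  proof -
    have "binomial_transform (\<lambda>k. harm k 1 / of_nat k) m
        = (\<Sum>j=1..m. binomial_transform (\<lambda>k. harm k 1) j / of_nat j)"
      by (rule binomial_transform_divide)
    also have "\<dots> = (\<Sum>j=1..m. 1 / of_nat j ^ 2)"
      by (rule sum.cong) (auto simp: binomial_transform_harm[simplified] power2_eq_square)
    finally show ?thesis unfolding harm_def .
  qed
  have "(\<lambda>k. harm k 1 / (of_nat k::rat) ^ 2) = (\<lambda>k. (harm k 1 / of_nat k) / of_nat k)"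
    by (simp add: power2_eq_square)
  hence "binomial_transform (\<lambda>k. harm k 1 / of_nat k ^ 2) n
      = (\<Sum>m=1..n. binomial_transform (\<lambda>k. harm k 1 / of_nat k) m / of_nat m)"
    using binomial_transform_divide[of "\<lambda>k. harm k 1 / of_nat k" n] by simp
  thus ?thesis unfolding div .
qed

section \<open>The coefficients (-1)^k C(p-1,k) modulo p^3\<close>

context prime_modulus
begin

definition signed_binom :: "nat \<Rightarrow> rat" where
  "signed_binom k = (\<Prod>j=1..k. 1 - of_nat p / of_nat j)"

lemma signed_binom_Suc: "signed_binom (Suc k) = signed_binom k * (1 - of_nat p / of_nat (Suc k))"
  unfolding signed_binom_def by simp

lemma signed_binom_eq: "(-1)^k * of_nat ((p-1) choose k) = signed_binom k"
proof (induction k)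
  case 0 then show ?case by (simp add: signed_binom_def)
next
  case (Suc k)
  define N where "N = p - 1"
  have N: "(of_nat N :: rat) = of_nat p - 1" unfolding N_def using p_gt_1 by (simp add: of_nat_diff)
  have "of_nat N * (of_nat N gchoose k)
      = of_nat k * (of_nat N gchoose k) + of_nat (Suc k) * ((of_nat N :: rat) gchoose (Suc k))"
    by (rule gbinomial_mult_1)
  hence "of_nat (Suc k) * (of_nat (N choose Suc k) :: rat) = (of_nat N - of_nat k) * of_nat (N choose k)"
    unfolding binomial_gbinomial by (simp add: algebra_simps)
  hence "(of_nat (N choose Suc k) :: rat) = (of_nat N - of_nat k) * of_nat (N choose k) / of_nat (Suc k)"
    by (simp add: field_simps del: of_nat_Suc)
  hence "(-1)^(Suc k) * (of_nat (N choose Suc k) :: rat)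
      = ((-1)^k * of_nat (N choose k)) * ((of_nat k - of_nat N) / of_nat (Suc k))"
    by (simp add: algebra_simps)
  also have "(of_nat k - of_nat N) / of_nat (Suc k) = 1 - of_nat p / (of_nat (Suc k) :: rat)"
    unfolding N by (simp add: field_simps)
  finally show ?case using Suc unfolding N_def signed_binom_Suc by simp
qed

lemma binomial_transform_at_p_minus_1:
  "binomial_transform f (p-1) = - (\<Sum>k=1..p-1. signed_binom k * f k)"
proof -
  have "binomial_transform f (p-1) = (\<Sum>i<p-1. - (signed_binom (Suc i) * f (Suc i)))"
    unfolding binomial_transform_def signed_binom_eq[symmetric] by (rule sum.cong) auto
  thus ?thesis using sum.atLeast1_atMost_eq[of "\<lambda>k. signed_binom k * f k" "p-1"]
    by (simp add: sum_negf)
qed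

end

context prime_ge_7
begin

lemma p_int_harm_e2: "k < p \<Longrightarrow> p_int (harm_e2 k)"
  unfolding harm_e2_def using p_int_mult[OF p_int_half, of "harm k 1 ^ 2 - harm k 2"] p_int_harm
  by (simp add: p_int_diff p_int_power)

lemma signed_binom_expansion:
  "k \<le> p - 1 \<Longrightarrow> p_dvd 3 (signed_binom k - (1 - of_nat p * harm k 1 + of_nat p^2 * harm_e2 k))"
proof (induction k)
  case 0 then show ?case by (simp add: signed_binom_def harm_e2_def harm_def)
next
  case (Suc k)
  define x where "x = 1 / (of_nat (Suc k) :: rat)"
  have kp: "Suc k < p" using Suc.prems p_gt_1 by linarith
  have "p_int x" unfolding x_def using kp p_int_inverse_nat[of "Suc k"] by simp
  have "signed_binom (Suc k) - (1 - of_nat p * harm (Suc k) 1 + of_nat p^2 * harm_e2 (Suc k))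
      = (signed_binom k - (1 - of_nat p * harm k 1 + of_nat p^2 * harm_e2 k)) * (1 - of_nat p * x)
        - of_nat p ^ 3 * (harm_e2 k * x)"
    unfolding signed_binom_Suc harm_e2_Suc[OF x_def] harm_Suc[OF x_def] using x_def
    by (simp add: algebra_simps power2_eq_square power3_eq_cube)
  moreover have "p_dvd 3 ((signed_binom k - (1 - of_nat p * harm k 1 + of_nat p^2 * harm_e2 k))
                           * (1 - of_nat p * x))"
    using Suc kp \<open>p_int x\<close> by (intro p_dvd_mult_right p_int_diff p_int_mult) auto
  moreover have "p_dvd 3 (of_nat p ^ 3 * (harm_e2 k * x))"
    using \<open>p_int x\<close> p_int_harm_e2 kp by (intro p_dvd_mult_right p_dvd_power_p p_int_mult) auto
  ultimately show ?case by (metis p_dvd_diff)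
qed

lemma signed_binom_expansion_2:
  assumes "k \<le> p - 1" shows "p_dvd 2 (signed_binom k - (1 - of_nat p * harm k 1))"
proof -
  have "k < p" using assms p_gt_1 by linarith
  have "p_dvd 2 (signed_binom k - (1 - of_nat p * harm k 1 + of_nat p^2 * harm_e2 k))"
    using p_dvd_mono[OF _ signed_binom_expansion[OF assms]] by simp
  moreover have "p_dvd 2 (of_nat p^2 * harm_e2 k)"
    using p_int_harm_e2[OF \<open>k < p\<close>] by (intro p_dvd_mult_right p_dvd_power_p)
  ultimately have "p_dvd 2 ((signed_binom k - (1 - of_nat p * harm k 1 + of_nat p^2 * harm_e2 k))
                            + of_nat p^2 * harm_e2 k)"
    by blast
  also have "(signed_binom k - (1 - of_nat p * harm k 1 + of_nat p^2 * harm_e2 k))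
             + of_nat p^2 * harm_e2 k = signed_binom k - (1 - of_nat p * harm k 1)"
    by simp
  finally show ?thesis .
qed

end

section \<open>The sums S1 and S2 modulo p^2\<close>

context prime_ge_7
begin

text \<open>sum_{k<p} H_k^2/k^2 = 0 mod p.  Evaluating T(H_k/k^2) at p - 1 exactly and
  replacing (-1)^k C(p-1,k) by 1 - p H_k shows that p times this sum is congruent to
  H_{p-1} H_{p-1,2} + H_{p-1,3} = 0 modulo p^2.\<close>
lemma sum_harm_sq_over_k2_p_dvd: "p_dvd 1 (\<Sum>k=1..p-1. harm k 1 ^ 2 / of_nat k ^ 2)"
proof -
  have transform: "(\<Sum>k=1..p-1. signed_binom k * (harm k 1 / of_nat k ^ 2))
      = (\<Sum>k=1..p-1. harm k 1 / of_nat k ^ 2) - harm (p-1) 1 * harm (p-1) 2 - harm (p-1) 3"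
  proof -
    have "- (\<Sum>k=1..p-1. signed_binom k * (harm k 1 / of_nat k ^ 2)) = (\<Sum>k=1..p-1. harm k 2 / of_nat k)"
      using binomial_transform_at_p_minus_1[of "\<lambda>k. harm k 1 / of_nat k ^ 2"]
        binomial_transform_harm_over_square[of "p-1"] by simp
    thus ?thesis using sum_harm2_over_k_plus_sum_harm_over_k2[of "p-1"] by linarith
  qed
  have "p_dvd 2 (\<Sum>k=1..p-1. (signed_binom k - (1 - of_nat p * harm k 1)) * (harm k 1 / of_nat k ^ 2))"
    using signed_binom_expansion_2 p_int_harm
    by (intro p_dvd_sum p_dvd_mult_right p_int_divide_nat_power) auto
  also have "(\<Sum>k=1..p-1. (signed_binom k - (1 - of_nat p * harm k 1)) * (harm k 1 / of_nat k ^ 2))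
      = (\<Sum>k=1..p-1. signed_binom k * (harm k 1 / of_nat k ^ 2)) - (\<Sum>k=1..p-1. harm k 1 / of_nat k ^ 2)
        + of_nat p * (\<Sum>k=1..p-1. harm k 1 ^ 2 / of_nat k ^ 2)"
    by (simp add: algebra_simps sum_subtractf sum.distrib sum_distrib_left power2_eq_square)
  also have "\<dots> = of_nat p * (\<Sum>k=1..p-1. harm k 1 ^ 2 / of_nat k ^ 2)
                    - harm (p-1) 1 * harm (p-1) 2 - harm (p-1) 3"
    unfolding transform by simp
  finally have "p_dvd 2 (of_nat p * (\<Sum>k=1..p-1. harm k 1 ^ 2 / of_nat k ^ 2)
                         - harm (p-1) 1 * harm (p-1) 2 - harm (p-1) 3)" .
  moreover have "p_dvd 2 (harm (p-1) 1 * harm (p-1) 2)"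
    using harm1_p_dvd p_int_harm[of "p-1" 2] p_gt_1 by (intro p_dvd_mult_right) auto
  ultimately have "p_dvd 2 ((of_nat p * (\<Sum>k=1..p-1. harm k 1 ^ 2 / of_nat k ^ 2)
                             - harm (p-1) 1 * harm (p-1) 2 - harm (p-1) 3)
                            + harm (p-1) 1 * harm (p-1) 2 + harm (p-1) 3)"
    using harm3_p_dvd by blast
  hence "p_dvd (1 + 1) (of_nat p ^ 1 * (\<Sum>k=1..p-1. harm k 1 ^ 2 / of_nat k ^ 2))"
    by (simp add: numeral_2_eq_2)
  from p_dvd_divide_power_p[OF this] show ?thesis using p_nonzero by simp
qed

lemma sum_harm_e2_over_k2_p_dvd: "p_dvd 1 (\<Sum>k=1..p-1. harm_e2 k / of_nat k ^ 2)"
proof -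
  have "p_dvd 1 (harm (p-1) 2 ^ 2)"
    using p_dvd_mono[OF _ p_dvd_mult[OF harm2_p_dvd harm2_p_dvd]] by (simp add: power2_eq_square)
  hence "p_dvd 1 ((1/2) * ((\<Sum>k=1..p-1. harm k 1 ^ 2 / of_nat k ^ 2)
                           - (1/2) * (harm (p-1) 2 ^ 2 + harm (p-1) 4)))"
    using sum_harm_sq_over_k2_p_dvd harm4_p_dvd p_int_half by (intro p_dvd_mult_left p_dvd_diff p_dvd_add) auto
  thus ?thesis unfolding sum_harm_e2_over_k2 by simp
qed

text \<open>p S1 = (3/2) H_{p-1,2} mod p^3.  Now T(1/k^2) is evaluated at p - 1 and
  (-1)^k C(p-1,k) is expanded to second order; the p^2 e_2 term contributes
  p^2 sum e_2(k)/k^2 = 0 mod p^3 and H_{p-1}^2 = 0 mod p^4.\<close>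
lemma p_times_sum_harm_over_k2:
  "p_dvd 3 (of_nat p * (\<Sum>k=1..p-1. harm k 1 / of_nat k ^ 2) - 3/2 * harm (p-1) 2)"
proof -
  define S where "S = (\<Sum>k=1..p-1. harm k 1 / of_nat k ^ 2)"
  define R where "R = of_nat p ^ 2 * (\<Sum>k=1..p-1. harm_e2 k / of_nat k ^ 2)"
  define B where "B = (\<Sum>k=1..p-1. signed_binom k * (1 / of_nat k ^ 2))"
  have transform: "- B = (harm (p-1) 1 ^ 2 + harm (p-1) 2) / 2"
    unfolding B_def
    using binomial_transform_at_p_minus_1[of "\<lambda>k. 1 / of_nat k ^ 2"]
      binomial_transform_inverse_square[of "p-1"] sum_harm_over_k[of "p-1"]
    by simp
  have "p_dvd 3 (\<Sum>k=1..p-1. (signed_binom k - (1 - of_nat p * harm k 1 + of_nat p^2 * harm_e2 k))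
                              * (1 / of_nat k ^ 2))"
    using signed_binom_expansion by (intro p_dvd_sum p_dvd_mult_right p_int_divide_nat_power) auto
  also have "(\<Sum>k=1..p-1. (signed_binom k - (1 - of_nat p * harm k 1 + of_nat p^2 * harm_e2 k))
                              * (1 / of_nat k ^ 2))
      = B - harm (p-1) 2 + of_nat p * S - R"
    unfolding harm_def[of "p-1" 2] B_def S_def R_def
    by (simp add: algebra_simps sum_subtractf sum.distrib sum_distrib_left)
  finally have main: "p_dvd 3 (B - harm (p-1) 2 + of_nat p * S - R)" .
  have "p_dvd 3 R"
    using p_dvd_mult_power_p[OF sum_harm_e2_over_k2_p_dvd, of 2] unfolding R_def by simp
  moreover have "p_dvd 3 ((1/2) * harm (p-1) 1 ^ 2)"
  proof -
    have "p_dvd (2 + 2) (harm (p-1) 1 * harm (p-1) 1)" by (rule p_dvd_mult[OF harm1_p_dvd harm1_p_dvd])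
    hence "p_dvd 3 (harm (p-1) 1 ^ 2)" using p_dvd_mono[of 3 4] by (simp add: power2_eq_square)
    thus ?thesis using p_int_half by blast
  qed
  ultimately have "p_dvd 3 ((B - harm (p-1) 2 + of_nat p * S - R) + (1/2) * harm (p-1) 1 ^ 2 + R)"
    using main by blast
  also have "(B - harm (p-1) 2 + of_nat p * S - R) + (1/2) * harm (p-1) 1 ^ 2 + R
             = of_nat p * S - 3/2 * harm (p-1) 2"
    using transform by (simp add: field_simps)
  finally show ?thesis unfolding S_def .
qed

lemma sum_harm_over_k2_cong_sum_harm_sq_over_k:
  "rat_cong (\<Sum>k=1..p-1. harm k 1 / of_nat k ^ 2) (\<Sum>k=1..p-1. harm k 1 ^ 2 / of_nat k) p 2"
proof -
  have "p_dvd 2 (harm (p-1) 1 * harm (p-1) 1 ^ 2)"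
    using harm1_p_dvd p_int_harm[of "p-1" 1] p_gt_1 by (intro p_dvd_mult_right p_int_power) auto
  hence "p_dvd 2 (harm (p-1) 1 ^ 3)" by (simp add: power3_eq_cube power2_eq_square mult.assoc)
  hence "p_dvd 2 ((1/3) * (harm (p-1) 3 - harm (p-1) 1 ^ 3))"
    using harm3_p_dvd p_int_third by blast
  also have "(1/3) * (harm (p-1) 3 - harm (p-1) 1 ^ 3)
      = (\<Sum>k=1..p-1. harm k 1 / of_nat k ^ 2) - (\<Sum>k=1..p-1. harm k 1 ^ 2 / of_nat k)"
    using harm_cube_identity[of "p-1"] by (simp add: field_simps)
  finally show ?thesis unfolding rat_cong_iff .
qed

lemma sum_harm_over_k2_cong_harm2:
  "rat_cong (\<Sum>k=1..p-1. harm k 1 / of_nat k ^ 2) (3 / (2 * of_nat p) * harm (p-1) 2) p 2"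
proof -
  have "p_dvd (2 + 1) (of_nat p * (\<Sum>k=1..p-1. harm k 1 / of_nat k ^ 2) - 3/2 * harm (p-1) 2)"
    using p_times_sum_harm_over_k2 by simp
  from p_dvd_divide_power_p[OF this]
  have "p_dvd 2 ((of_nat p * (\<Sum>k=1..p-1. harm k 1 / of_nat k ^ 2) - 3/2 * harm (p-1) 2) / of_nat p)"
    by simp
  also have "(of_nat p * (\<Sum>k=1..p-1. harm k 1 / of_nat k ^ 2) - 3/2 * harm (p-1) 2) / of_nat p
      = (\<Sum>k=1..p-1. harm k 1 / of_nat k ^ 2) - 3 / (2 * of_nat p) * harm (p-1) 2"
    using p_nonzero by (simp add: field_simps)
  finally show ?thesis unfolding rat_cong_iff .
qed

lemma harm1_cong_harm2:
  "rat_cong (- 3 / of_nat p ^ 2 * harm (p-1) 1) (3 / (2 * of_nat p) * harm (p-1) 2) p 2"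
proof -
  have "p_dvd (2 + 2) (harm (p-1) 1 + of_nat p / 2 * harm (p-1) 2)"
    using harm1_reflection by simp
  hence "p_dvd 2 ((-3) * ((harm (p-1) 1 + of_nat p / 2 * harm (p-1) 2) / of_nat p ^ 2))"
    by (intro p_dvd_mult_left p_dvd_divide_power_p) auto
  also have "(-3) * ((harm (p-1) 1 + of_nat p / 2 * harm (p-1) 2) / of_nat p ^ 2)
      = - 3 / of_nat p ^ 2 * harm (p-1) 1 - 3 / (2 * of_nat p) * harm (p-1) 2"
    using p_nonzero by (simp add: field_simps power2_eq_square)
  finally show ?thesis unfolding rat_cong_iff .
qed

end

theorem theorem1p1:
  fixes p :: nat
  assumes "prime p" and "p \<ge> 7"
  shows "rat_cong (\<Sum>k=1..p-1. harm k 1 / (of_nat k)^2) (\<Sum>k=1..p-1. (harm k 1)^2 / of_nat k) p 2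
       \<and> rat_cong (\<Sum>k=1..p-1. (harm k 1)^2 / of_nat k) (- 3 / (of_nat p)^2 * harm (p-1) 1) p 2
       \<and> rat_cong (- 3 / (of_nat p)^2 * harm (p-1) 1) (3 / (2 * of_nat p) * harm (p-1) 2) p 2"
proof -
  interpret prime_ge_7 p using assms by unfold_locales
  let ?S1 = "\<Sum>k=1..p-1. harm k 1 / of_nat k ^ 2"
  let ?S2 = "\<Sum>k=1..p-1. harm k 1 ^ 2 / of_nat k"
  have S1_S2: "rat_cong ?S1 ?S2 p 2" by (rule sum_harm_over_k2_cong_sum_harm_sq_over_k)
  have H1_H2: "rat_cong (- 3 / of_nat p ^ 2 * harm (p-1) 1) (3 / (2 * of_nat p) * harm (p-1) 2) p 2"
    by (rule harm1_cong_harm2)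
  have "rat_cong ?S2 (- 3 / of_nat p ^ 2 * harm (p-1) 1) p 2"
    using rat_cong_trans[OF rat_cong_sym[OF S1_S2]
            rat_cong_trans[OF sum_harm_over_k2_cong_harm2 rat_cong_sym[OF H1_H2]]] .
  with S1_S2 H1_H2 show ?thesis by simp
qed

end
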